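(* Let $\xi=(\xi_1,\xi_2)$ be a simple max-stable bivariate random vector with dependency set $K$. Let $C(u_1,u_2)=\exp\{-h(K,(-\log u_1,-\log u_2))\}$ be its copula, and let $\rho_S=12\int_0^1\int_0^1C(u_1,u_2)\,du_1du_2-3$ be its Spearman correlation coefficient. Then $$\rho_S=3\big(2V_2(L^o)-1\big),\qquad L=\tfrac12\big(K+[0,1]^2\big),$$ where $L^o=\{x\in[0,\infty)^2: h(L,x)\le1\}$, $V_2$ is area, and $+$ is Minkowski addition.
   Context: A simple max-stable random vector is max-stable with unit Fréchet marginals ($\mathbb{P}\{\xi_i\le t\}=e^{-1/t}$, $t>0$). Its dependency set is the compact convex set $K\subset[0,1]^2$ with $\mathbb{P}\{\xi\le x\}=\exp\{-h(K,(1/x_1,1/x_2))\}$ for $x\in(0,\infty)^2$. The support function is $h(K,x)=\sup_{y\in K}\langle y,x\rangle$, and $\tfrac12 M=\{\tfrac12 y:y\in M\}$. *)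

theory Defs
  imports "HOL-Probability.Probability"
begin

definition support_fun :: "(real \<times> real) set \<Rightarrow> real \<times> real \<Rightarrow> real" where
  "support_fun M x = (SUP y\<in>M. y \<bullet> x)"

definition joint_cdf :: "'a measure \<Rightarrow> ('a \<Rightarrow> real \<times> real) \<Rightarrow> real \<times> real \<Rightarrow> real" where
  "joint_cdf M \<xi> x = measure M {\<omega> \<in> space M. fst (\<xi> \<omega>) \<le> fst x \<and> snd (\<xi> \<omega>) \<le> snd x}"

text \<open>Max-stability, expressed through the distribution function F:
  for every n \<ge> 1 there are normalisations a_n > 0 and b_n (componentwise) such that
  the maximum of n i.i.d. copies, normalised, has the same law, i.e.
  F(a_n x + b_n)^n = F(x) for all x.\<close>
definition max_stable :: "'a measure \<Rightarrow> ('a \<Rightarrow> real \<times> real) \<Rightarrow> bool" where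
  "max_stable M \<xi> \<longleftrightarrow> (\<forall>n::nat. n \<ge> 1 \<longrightarrow>
     (\<exists>a1 a2 b1 b2::real. a1 > 0 \<and> a2 > 0 \<and>
        (\<forall>x1 x2. (joint_cdf M \<xi> (a1 * x1 + b1, a2 * x2 + b2)) ^ n = joint_cdf M \<xi> (x1, x2))))"

text \<open>Simple max-stable: max-stable with unit Fr\'echet marginals.\<close>
definition simple_max_stable :: "'a measure \<Rightarrow> ('a \<Rightarrow> real \<times> real) \<Rightarrow> bool" where
  "simple_max_stable M \<xi> \<longleftrightarrow> max_stable M \<xi> \<and>
     (\<forall>t>0. measure M {\<omega> \<in> space M. fst (\<xi> \<omega>) \<le> t} = exp (- 1 / t)) \<and>
     (\<forall>t>0. measure M {\<omega> \<in> space M. snd (\<xi> \<omega>) \<le> t} = exp (- 1 / t))"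

definition dependency_set :: "'a measure \<Rightarrow> ('a \<Rightarrow> real \<times> real) \<Rightarrow> (real \<times> real) set \<Rightarrow> bool" where
  "dependency_set M \<xi> K \<longleftrightarrow> compact K \<and> convex K \<and> K \<subseteq> {0..1} \<times> {0..1} \<and>
     (\<forall>x1>0. \<forall>x2>0. joint_cdf M \<xi> (x1, x2) = exp (- support_fun K (1 / x1, 1 / x2)))"

definition copula_of :: "(real \<times> real) set \<Rightarrow> real \<times> real \<Rightarrow> real" where
  "copula_of K u = exp (- support_fun K (- ln (fst u), - ln (snd u)))"

definition spearman_rho :: "(real \<times> real \<Rightarrow> real) \<Rightarrow> real" where
  "spearman_rho C = 12 * (LINT u : {0<..<1} \<times> {0<..<1} | lborel. C u) - 3"

definition minkowski_sum :: "(real \<times> real) set \<Rightarrow> (real \<times> real) set \<Rightarrow> (real \<times> real) set" where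
  "minkowski_sum A B = {a + b | a b. a \<in> A \<and> b \<in> B}"

definition polar_pos :: "(real \<times> real) set \<Rightarrow> (real \<times> real) set" where
  "polar_pos L = {x. 0 \<le> fst x \<and> 0 \<le> snd x \<and> support_fun L x \<le> 1}"

end

(*
  Substituting u_i = exp (- t_i) turns the copula integral into the integral of exp (- g) over the
  positive quadrant, where g t = h(K,t) + t_1 + t_2 equals 2 h(L,t) there, so that L^o = {g <= 2}.
  For a nonnegative, positively 1-homogeneous g on a cone in R^n, integrating exp (- r) [g t <= r]
  in both orders shows that the integral of exp (- g) is n! times the volume of {g <= 1}, because
  {g <= r} is the r-dilate of {g <= 1}. For n = 2 this gives 2 vol {g <= 1} = vol (L^o) / 2.
*)
theory Submission
  imports Defs
begin

lemma support_fun_upper: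
  assumes "bounded K" "y \<in> K"
  shows "y \<bullet> x \<le> support_fun K x"
  unfolding support_fun_def
  by (rule cSUP_upper)
     (use assms in \<open>auto intro!: bounded_imp_bdd_above bounded_linear_image bounded_linear_inner_left\<close>)

lemma support_fun_eq_maximum:
  assumes "a \<in> K" "\<And>y. y \<in> K \<Longrightarrow> y \<bullet> x \<le> a \<bullet> x"
  shows "support_fun K x = a \<bullet> x"
  unfolding support_fun_def by (rule cSup_eq_maximum) (use assms in auto)

lemma support_fun_attained:
  fixes x :: "real \<times> real"
  assumes "compact K" "K \<noteq> {}"
  obtains a where "a \<in> K" "\<And>y. y \<in> K \<Longrightarrow> y \<bullet> x \<le> a \<bullet> x" "support_fun K x = a \<bullet> x"
proof -
  have "continuous_on K (\<lambda>y. y \<bullet> x)"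
    by (intro continuous_intros)
  then obtain a where "a \<in> K" "\<forall>y\<in>K. y \<bullet> x \<le> a \<bullet> x"
    using continuous_attains_sup[OF assms] by blast
  with support_fun_eq_maximum that show thesis by blast
qed

lemma support_fun_scaleR:
  assumes "compact K" "K \<noteq> {}" "0 \<le> c"
  shows "support_fun K (c *\<^sub>R x) = c * support_fun K x"
proof -
  obtain a where a: "a \<in> K" "\<And>y. y \<in> K \<Longrightarrow> y \<bullet> x \<le> a \<bullet> x" "support_fun K x = a \<bullet> x"
    using support_fun_attained[OF assms(1,2), of x] by blast
  have "support_fun K (c *\<^sub>R x) = a \<bullet> (c *\<^sub>R x)"
    by (rule support_fun_eq_maximum) (use a assms(3) in \<open>auto intro: mult_left_mono\<close>)
  with a(3) show ?thesis by simp
qed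

lemma support_fun_image_scaleR:
  assumes "compact K" "K \<noteq> {}" "0 \<le> c"
  shows "support_fun ((\<lambda>y. c *\<^sub>R y) ` K) x = c * support_fun K x"
proof -
  obtain a where a: "a \<in> K" "\<And>y. y \<in> K \<Longrightarrow> y \<bullet> x \<le> a \<bullet> x" "support_fun K x = a \<bullet> x"
    using support_fun_attained[OF assms(1,2), of x] by blast
  have "support_fun ((\<lambda>y. c *\<^sub>R y) ` K) x = (c *\<^sub>R a) \<bullet> x"
  proof (rule support_fun_eq_maximum)
    fix y assume "y \<in> (\<lambda>y. c *\<^sub>R y) ` K"
    then obtain k where "k \<in> K" "y = c *\<^sub>R k" by blast
    with a(2) assms(3) show "y \<bullet> x \<le> (c *\<^sub>R a) \<bullet> x" by (simp add: mult_left_mono)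
  qed (use a(1) in blast)
  with a(3) show ?thesis by simp
qed

lemma support_fun_minkowski_sum:
  assumes "compact A" "A \<noteq> {}" "compact B" "B \<noteq> {}"
  shows "support_fun (minkowski_sum A B) x = support_fun A x + support_fun B x"
proof -
  obtain a where a: "a \<in> A" "\<And>y. y \<in> A \<Longrightarrow> y \<bullet> x \<le> a \<bullet> x" "support_fun A x = a \<bullet> x"
    using support_fun_attained[OF assms(1,2), of x] by blast
  obtain b where b: "b \<in> B" "\<And>y. y \<in> B \<Longrightarrow> y \<bullet> x \<le> b \<bullet> x" "support_fun B x = b \<bullet> x"
    using support_fun_attained[OF assms(3,4), of x] by blast
  have "support_fun (minkowski_sum A B) x = (a + b) \<bullet> x"
  proof (rule support_fun_eq_maximum)
    fix y assume "y \<in> minkowski_sum A B"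
    then obtain a' b' where "a' \<in> A" "b' \<in> B" "y = a' + b'"
      unfolding minkowski_sum_def by blast
    with a(2) b(2) show "y \<bullet> x \<le> (a + b) \<bullet> x" by (simp add: inner_add_left add_mono)
  qed (use a(1) b(1) in \<open>unfold minkowski_sum_def, blast\<close>)
  with a(3) b(3) show ?thesis by (simp add: inner_add_left)
qed

lemma support_fun_unit_square:
  assumes "0 \<le> fst x" "0 \<le> snd x"
  shows "support_fun ({0..1} \<times> {0..1}) x = fst x + snd x"
proof -
  have "support_fun ({0..1} \<times> {0..1}) x = (1, 1) \<bullet> x"
    by (rule support_fun_eq_maximum)
       (use assms in \<open>auto simp: inner_prod_def intro!: add_mono mult_left_le_one_le\<close>)
  then show ?thesis by (simp add: inner_prod_def)
qed

lemma support_fun_nonneg: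
  assumes "compact K" "K \<noteq> {}" "K \<subseteq> {0..} \<times> {0..}" "0 \<le> fst x" "0 \<le> snd x"
  shows "0 \<le> support_fun K x"
proof -
  obtain a where "a \<in> K" "support_fun K x = a \<bullet> x"
    using support_fun_attained[OF assms(1,2)] by metis
  with assms(3-5) show ?thesis by (auto simp: inner_prod_def)
qed

lemma convex_on_support_fun:
  assumes "bounded K" "K \<noteq> {}"
  shows "convex_on UNIV (support_fun K)"
proof
  fix t :: real and x y assume t: "0 < t" "t < 1"
  show "support_fun K ((1 - t) *\<^sub>R x + t *\<^sub>R y) \<le> (1 - t) * support_fun K x + t * support_fun K y"
    unfolding support_fun_def[of K "(1 - t) *\<^sub>R x + t *\<^sub>R y"]
  proof (rule cSUP_least)
    fix a assume "a \<in> K"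
    with assms(1) t show "a \<bullet> ((1 - t) *\<^sub>R x + t *\<^sub>R y) \<le> (1 - t) * support_fun K x + t * support_fun K y"
      by (auto simp: inner_add_right intro!: add_mono mult_left_mono support_fun_upper)
  qed fact
qed simp

lemma continuous_on_support_fun:
  assumes "bounded K" "K \<noteq> {}"
  shows "continuous_on UNIV (support_fun K)"
  using convex_on_continuous[OF open_UNIV convex_on_support_fun[OF assms]] .

lemma polar_pos_half_minkowski_unit_square:
  assumes "compact K" "K \<noteq> {}"
  shows "polar_pos ((\<lambda>y. (1/2::real) *\<^sub>R y) ` minkowski_sum K ({0..1} \<times> {0..1}))
    = {t \<in> {0..} \<times> {0..}. support_fun K t + fst t + snd t \<le> 2}"
proof -
  have square: "compact ({0..1::real} \<times> {0..1::real})" "{0..1::real} \<times> {0..1::real} \<noteq> {}"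
    by (auto intro: compact_Times)
  have "compact (minkowski_sum K ({0..1} \<times> {0..1}))"
    unfolding minkowski_sum_def by (rule compact_sums[OF assms(1) square(1)])
  moreover have "minkowski_sum K ({0..1} \<times> {0..1}) \<noteq> {}"
    using assms(2) square(2) unfolding minkowski_sum_def by blast
  ultimately have support_L: "support_fun ((\<lambda>y. (1/2::real) *\<^sub>R y) ` minkowski_sum K ({0..1} \<times> {0..1})) t
      = (support_fun K t + fst t + snd t) / 2" if "0 \<le> fst t" "0 \<le> snd t" for t
    using support_fun_image_scaleR[of "minkowski_sum K ({0..1} \<times> {0..1})" "1/2" t]
      support_fun_minkowski_sum[OF assms square, of t] support_fun_unit_square[OF that]
    by simp
  show ?thesis
  proof (intro set_eqI)
    fix t :: "real \<times> real"
    show "t \<in> polar_pos ((\<lambda>y. (1/2::real) *\<^sub>R y) ` minkowski_sum K ({0..1} \<times> {0..1}))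
      \<longleftrightarrow> t \<in> {t \<in> {0..} \<times> {0..}. support_fun K t + fst t + snd t \<le> 2}"
      by (cases t) (auto simp: polar_pos_def support_L)
  qed
qed

lemma nn_integral_lborel_scaleR:
  fixes f :: "'a::euclidean_space \<Rightarrow> ennreal"
  assumes [measurable]: "f \<in> borel_measurable borel" and "0 < c"
  shows "(\<integral>\<^sup>+x. f x \<partial>lborel) = ennreal (c ^ DIM('a)) * (\<integral>\<^sup>+x. f (c *\<^sub>R x) \<partial>lborel)"
proof -
  have "lborel = density (distr lborel borel (\<lambda>x::'a. 0 + c *\<^sub>R x)) (\<lambda>_. ennreal (\<bar>c\<bar> ^ DIM('a)))"
    by (rule lborel_affine) (use assms(2) in simp)
  then have "(\<integral>\<^sup>+x. f x \<partial>lborel)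
      = (\<integral>\<^sup>+x. f x \<partial>density (distr lborel borel (\<lambda>x::'a. 0 + c *\<^sub>R x)) (\<lambda>_. ennreal (\<bar>c\<bar> ^ DIM('a))))"
    by (rule arg_cong)
  also have "\<dots> = (\<integral>\<^sup>+x. ennreal (c ^ DIM('a)) * f (c *\<^sub>R x) \<partial>lborel)"
    using assms(2) by (simp add: nn_integral_density nn_integral_distr)
  also have "\<dots> = ennreal (c ^ DIM('a)) * (\<integral>\<^sup>+x. f (c *\<^sub>R x) \<partial>lborel)"
    by (rule nn_integral_cmult) simp
  finally show ?thesis .
qed

lemma emeasure_sublevel_homogeneous:
  fixes g :: "'a::euclidean_space \<Rightarrow> real"
  assumes [measurable]: "g \<in> borel_measurable borel" "T \<in> sets borel"
    and cone: "\<And>c t. 0 < c \<Longrightarrow> c *\<^sub>R t \<in> T \<longleftrightarrow> t \<in> T"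
    and hom: "\<And>c t. 0 < c \<Longrightarrow> g (c *\<^sub>R t) = c * g t"
    and "0 < r"
  shows "emeasure lborel {t \<in> T. g t \<le> r} = ennreal (r ^ DIM('a)) * emeasure lborel {t \<in> T. g t \<le> 1}"
proof -
  have "indicator {t \<in> T. g t \<le> r} (r *\<^sub>R t) = (indicator {t \<in> T. g t \<le> 1} t :: ennreal)" for t
    using cone[OF \<open>0 < r\<close>, of t] hom[OF \<open>0 < r\<close>, of t] \<open>0 < r\<close> by (simp add: indicator_def)
  then show ?thesis
    using nn_integral_lborel_scaleR[of "indicator {t \<in> T. g t \<le> r}" r] \<open>0 < r\<close> by simp
qed

lemma nn_integral_exp_neg_Ici:
  "(\<integral>\<^sup>+r. ennreal (exp (- r)) * indicator {a..} r \<partial>lborel) = ennreal (exp (- a))"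
proof -
  have "(\<integral>\<^sup>+r. ennreal (exp (- r)) * indicator {a..} r \<partial>lborel)
      = ennreal \<bar>1\<bar> * (\<integral>\<^sup>+r. ennreal (exp (- (a + 1 * r))) * indicator {a..} (a + 1 * r) \<partial>lborel)"
    by (rule nn_integral_real_affine) auto
  also have "\<dots> = (\<integral>\<^sup>+r. ennreal (exp (- a)) * (ennreal (r ^ 0 * exp (- r)) * indicator {0..} r) \<partial>lborel)"
    by (auto intro!: nn_integral_cong simp: exp_diff ennreal_mult'[symmetric] exp_minus field_simps
        split: split_indicator)
  also have "\<dots> = ennreal (exp (- a))"
    by (subst nn_integral_cmult, simp, subst nn_intergal_power_times_exp_Ici, simp)
  finally show ?thesis .
qed

lemma nn_integral_exp_neg_homogeneous:
  fixes g :: "'a::euclidean_space \<Rightarrow> real"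
  assumes [measurable]: "g \<in> borel_measurable borel" "T \<in> sets borel"
    and cone: "\<And>c t. 0 < c \<Longrightarrow> c *\<^sub>R t \<in> T \<longleftrightarrow> t \<in> T"
    and hom: "\<And>c t. 0 < c \<Longrightarrow> g (c *\<^sub>R t) = c * g t"
    and nonneg: "\<And>t. t \<in> T \<Longrightarrow> 0 \<le> g t"
  shows "(\<integral>\<^sup>+t. ennreal (exp (- g t)) * indicator T t \<partial>lborel)
    = ennreal (fact DIM('a)) * emeasure lborel {t \<in> T. g t \<le> 1}"
proof -
  define V where "V = emeasure lborel {t \<in> T. g t \<le> 1}"
  define H where "H p = (if fst p \<in> T \<and> g (fst p) \<le> snd p then ennreal (exp (- snd p)) else 0)"
    for p :: "'a \<times> real"
  have "H \<in> borel_measurable (borel \<Otimes>\<^sub>M borel)"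
    unfolding H_def by measurable
  then have H_measurable: "H \<in> borel_measurable (lborel \<Otimes>\<^sub>M lborel)"
    by (simp cong: measurable_cong_sets)
  have integral_snd: "(\<integral>\<^sup>+r. H (t, r) \<partial>lborel) = ennreal (exp (- g t)) * indicator T t" for t
  proof (cases "t \<in> T")
    case True
    then have "(\<integral>\<^sup>+r. H (t, r) \<partial>lborel) = (\<integral>\<^sup>+r. ennreal (exp (- r)) * indicator {g t..} r \<partial>lborel)"
      by (auto intro!: nn_integral_cong simp: H_def split: split_indicator)
    with True show ?thesis by (simp add: nn_integral_exp_neg_Ici)
  qed (simp add: H_def)
  have integral_fst: "(\<integral>\<^sup>+t. H (t, r) \<partial>lborel) = ennreal (r ^ DIM('a) * exp (- r)) * indicator {0..} r * V"
    if "r \<noteq> 0" for r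
  proof (cases "0 < r")
    case True
    have "(\<integral>\<^sup>+t. H (t, r) \<partial>lborel) = (\<integral>\<^sup>+t. ennreal (exp (- r)) * indicator {t \<in> T. g t \<le> r} t \<partial>lborel)"
      by (auto intro!: nn_integral_cong simp: H_def split: split_indicator)
    also have "\<dots> = ennreal (exp (- r)) * (ennreal (r ^ DIM('a)) * V)"
      using emeasure_sublevel_homogeneous[OF assms(1-4) True] by (simp add: nn_integral_cmult V_def)
    finally show ?thesis
      using True by (simp add: ennreal_mult mult.commute mult.left_commute)
  next
    case False
    with that nonneg have "H (t, r) = 0" for t
      by (fastforce simp: H_def)
    with False that show ?thesis by simp
  qed
  have "(\<integral>\<^sup>+t. ennreal (exp (- g t)) * indicator T t \<partial>lborel) = (\<integral>\<^sup>+t. \<integral>\<^sup>+r. H (t, r) \<partial>lborel \<partial>lborel)"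
    by (simp add: integral_snd)
  also have "\<dots> = (\<integral>\<^sup>+r. \<integral>\<^sup>+t. H (t, r) \<partial>lborel \<partial>lborel)"
    by (rule lborel_pair.Fubini'[symmetric]) (use H_measurable in simp)
  also have "\<dots> = (\<integral>\<^sup>+r. ennreal (r ^ DIM('a) * exp (- r)) * indicator {0..} r * V \<partial>lborel)"
    by (rule nn_integral_cong_AE) (use AE_lborel_singleton[of 0] integral_fst in auto)
  also have "\<dots> = ennreal (fact DIM('a)) * V"
    by (subst nn_integral_multc) (simp_all add: nn_intergal_power_times_exp_Ici)
  finally show ?thesis by (simp add: V_def)
qed

lemma prob_space_uniform_unit_interval: "prob_space (density lborel (indicator {0<..<1::real}))"
  by (rule prob_spaceI) (simp add: emeasure_restricted)

lemma distr_neg_ln_uniform: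
  "distr (density lborel (indicator {0<..<1::real})) borel (\<lambda>u. - ln u)
     = density lborel (\<lambda>x. ennreal (exponential_density 1 x))"
proof (rule cdf_unique)
  let ?U = "density lborel (indicator {0<..<1::real})"
  let ?E = "density lborel (\<lambda>x. ennreal (exponential_density 1 x))"
  interpret U: prob_space ?U by (rule prob_space_uniform_unit_interval)
  show "real_distribution (distr ?U borel (\<lambda>u. - ln u))"
    by (auto simp: real_distribution_def real_distribution_axioms_def intro!: U.prob_space_distr)
  show "real_distribution ?E"
    by (auto simp: real_distribution_def real_distribution_axioms_def intro!: prob_space_exponential_density)
  show "cdf (distr ?U borel (\<lambda>u. - ln u)) = cdf ?E"
  proof
    fix x :: real
    have preimage: "{0<..<1} \<inter> (\<lambda>u. - ln u) -` {..x} = {exp (- x)..<1}"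
    proof (intro set_eqI iffI)
      fix u assume u: "u \<in> {exp (- x)..<1}"
      then have "0 < u"
        by (auto intro: less_le_trans[OF exp_gt_zero])
      with u have "- x \<le> ln u"
        by (simp add: ln_ge_iff)
      with u \<open>0 < u\<close> show "u \<in> {0<..<1} \<inter> (\<lambda>u. - ln u) -` {..x}"
        by simp
    qed (auto simp: ln_ge_iff[symmetric])
    have "cdf (distr ?U borel (\<lambda>u. - ln u)) x = measure ?U ((\<lambda>u. - ln u) -` {..x})"
      by (simp add: cdf_def measure_distr)
    also have "\<dots> = measure lborel ({0<..<1} \<inter> (\<lambda>u. - ln u) -` {..x})"
      by (rule measure_restricted) (auto simp: vimage_def)
    also have "\<dots> = cdf ?E x"
      by (simp add: preimage cdf_def measure_def emeasure_erlang_density erlang_CDF_0)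
    finally show "cdf (distr ?U borel (\<lambda>u. - ln u)) x = cdf ?E x" .
  qed
qed

lemma nn_integral_neg_ln_unit_square:
  fixes f :: "real \<times> real \<Rightarrow> ennreal"
  assumes [measurable]: "f \<in> borel_measurable borel"
  shows "(\<integral>\<^sup>+u. indicator ({0<..<1} \<times> {0<..<1}) u * f (- ln (fst u), - ln (snd u)) \<partial>lborel)
       = (\<integral>\<^sup>+t. indicator ({0..} \<times> {0..}) t * ennreal (exp (- (fst t + snd t))) * f t \<partial>lborel)"
proof -
  let ?U = "density lborel (indicator {0<..<1::real})"
  let ?E = "density lborel (\<lambda>x. ennreal (exponential_density 1 x))"
  let ?neg_ln = "\<lambda>(x, y). (- ln x, - ln y)"
  have sigma_finite_U: "sigma_finite_measure ?U"
    by (rule prob_space_imp_sigma_finite) (rule prob_space_uniform_unit_interval)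
  have sigma_finite_E: "sigma_finite_measure ?E"
    by (rule prob_space_imp_sigma_finite) (simp add: prob_space_exponential_density)
  have f_pair[measurable]: "f \<in> borel_measurable (borel \<Otimes>\<^sub>M borel)"
    by (simp add: borel_prod)
  have "(\<integral>\<^sup>+u. indicator ({0<..<1} \<times> {0<..<1}) u * f (- ln (fst u), - ln (snd u)) \<partial>lborel)
      = (\<integral>\<^sup>+u. (\<lambda>(x, y). indicator {0<..<1} x * indicator {0<..<1} y) u * f (?neg_ln u) \<partial>(lborel \<Otimes>\<^sub>M lborel))"
    by (subst lborel_prod) (auto intro!: nn_integral_cong split: split_indicator)
  also have "\<dots> = (\<integral>\<^sup>+u. f (?neg_ln u) \<partial>(?U \<Otimes>\<^sub>M ?U))"
    by (subst pair_measure_density) (auto simp: nn_integral_density intro: sigma_finite_U lborel.sigma_finite_measure_axioms)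
  also have "\<dots> = (\<integral>\<^sup>+t. f t \<partial>distr (?U \<Otimes>\<^sub>M ?U) (borel \<Otimes>\<^sub>M borel) ?neg_ln)"
    by (subst nn_integral_distr) auto
  also have "distr (?U \<Otimes>\<^sub>M ?U) (borel \<Otimes>\<^sub>M borel) ?neg_ln
      = distr ?U borel (\<lambda>u. - ln u) \<Otimes>\<^sub>M distr ?U borel (\<lambda>u. - ln u)"
    by (rule pair_measure_distr[symmetric])
       (use sigma_finite_E in \<open>auto simp: distr_neg_ln_uniform\<close>)
  also have "\<dots> = ?E \<Otimes>\<^sub>M ?E"
    by (simp add: distr_neg_ln_uniform)
  also have "(\<integral>\<^sup>+t. f t \<partial>(?E \<Otimes>\<^sub>M ?E))
      = (\<integral>\<^sup>+t. (\<lambda>(x, y). ennreal (exponential_density 1 x) * ennreal (exponential_density 1 y)) t * f t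
           \<partial>(lborel \<Otimes>\<^sub>M lborel))"
    by (subst pair_measure_density) (auto simp: nn_integral_density intro: sigma_finite_E lborel.sigma_finite_measure_axioms)
  also have "\<dots> = (\<integral>\<^sup>+t. indicator ({0..} \<times> {0..}) t * ennreal (exp (- (fst t + snd t))) * f t \<partial>lborel)"
    by (subst lborel_prod[symmetric])
       (auto intro!: nn_integral_cong simp: exponential_density_def ennreal_mult'[symmetric] mult_exp_exp
         split: split_indicator)
  finally show ?thesis .
qed

lemma borel_measurable_support_fun:
  assumes "bounded K" "K \<noteq> {}"
  shows "support_fun K \<in> borel_measurable borel"
  using continuous_on_support_fun[OF assms] by (rule borel_measurable_continuous_onI)

lemma borel_measurable_copula_of:
  assumes "bounded K" "K \<noteq> {}"
  shows "copula_of K \<in> borel_measurable borel"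
proof -
  have [measurable]: "support_fun K \<in> borel_measurable (borel \<Otimes>\<^sub>M borel)"
    using borel_measurable_support_fun[OF assms] by (simp add: borel_prod)
  have "(\<lambda>u. exp (- support_fun K (- ln (fst u), - ln (snd u)))) \<in> borel_measurable (borel \<Otimes>\<^sub>M borel)"
    by measurable
  then show ?thesis
    by (simp add: copula_of_def[abs_def] borel_prod)
qed

lemma nn_integral_copula_of:
  assumes "compact K" "K \<noteq> {}" "K \<subseteq> {0..} \<times> {0..}"
  shows "(\<integral>\<^sup>+u. ennreal (indicator ({0<..<1} \<times> {0<..<1}) u * copula_of K u) \<partial>lborel)
    = ennreal (1/2) * emeasure lborel {t \<in> {0..} \<times> {0..}. support_fun K t + fst t + snd t \<le> 2}"
proof -
  define Q :: "(real \<times> real) set" where "Q = {0..} \<times> {0..}"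
  define g where "g t = support_fun K t + fst t + snd t" for t
  have support_measurable: "support_fun K \<in> borel_measurable borel"
    by (rule borel_measurable_support_fun[OF compact_imp_bounded[OF assms(1)] assms(2)])
  then have g_measurable: "g \<in> borel_measurable borel"
    unfolding g_def by (simp add: borel_prod[symmetric])
  have Q_borel: "Q \<in> sets borel"
    unfolding Q_def by (intro borel_closed closed_Times closed_atLeast)
  have Q_cone: "c *\<^sub>R t \<in> Q \<longleftrightarrow> t \<in> Q" if "0 < c" for c t
    using that by (cases t) (auto simp: Q_def zero_le_mult_iff)
  have g_homogeneous: "g (c *\<^sub>R t) = c * g t" if "0 < c" for c t
    using that support_fun_scaleR[OF assms(1,2), of c t] by (simp add: g_def algebra_simps)
  have g_nonneg: "0 \<le> g t" if "t \<in> Q" for t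
    using that support_fun_nonneg[OF assms, of t] by (auto simp: g_def Q_def)
  have "(\<integral>\<^sup>+u. ennreal (indicator ({0<..<1} \<times> {0<..<1}) u * copula_of K u) \<partial>lborel)
      = (\<integral>\<^sup>+u. indicator ({0<..<1} \<times> {0<..<1}) u
           * ennreal (exp (- support_fun K (- ln (fst u), - ln (snd u)))) \<partial>lborel)"
    by (auto intro!: nn_integral_cong simp: copula_of_def split: split_indicator)
  also have "\<dots> = (\<integral>\<^sup>+t. indicator Q t * ennreal (exp (- (fst t + snd t))) * ennreal (exp (- support_fun K t)) \<partial>lborel)"
    unfolding Q_def by (rule nn_integral_neg_ln_unit_square) (use support_measurable in measurable)
  also have "\<dots> = (\<integral>\<^sup>+t. ennreal (exp (- g t)) * indicator Q t \<partial>lborel)"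
    by (auto intro!: nn_integral_cong simp: g_def ennreal_mult'[symmetric] mult_exp_exp algebra_simps
        split: split_indicator)
  also have "\<dots> = ennreal 2 * emeasure lborel {t \<in> Q. g t \<le> 1}"
    using nn_integral_exp_neg_homogeneous[OF g_measurable Q_borel Q_cone g_homogeneous g_nonneg] by simp
  also have "\<dots> = ennreal (1/2 * 4) * emeasure lborel {t \<in> Q. g t \<le> 1}"
    by simp
  also have "\<dots> = ennreal (1/2) * (ennreal 4 * emeasure lborel {t \<in> Q. g t \<le> 1})"
    by (subst ennreal_mult) (auto simp: mult.assoc)
  also have "\<dots> = ennreal (1/2) * emeasure lborel {t \<in> Q. g t \<le> 2}"
    using emeasure_sublevel_homogeneous[OF g_measurable Q_borel Q_cone g_homogeneous, of 2] by simp
  finally show ?thesis by (simp add: Q_def g_def)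
qed

lemma set_lebesgue_integral_copula_of:
  assumes "compact K" "K \<noteq> {}" "K \<subseteq> {0..} \<times> {0..}"
  shows "(LINT u : {0<..<1} \<times> {0<..<1} | lborel. copula_of K u)
    = measure lborel {t \<in> {0..} \<times> {0..}. support_fun K t + fst t + snd t \<le> 2} / 2"
proof -
  have "{0<..<1::real} \<times> {0<..<1::real} \<in> sets lborel"
    by (simp add: borel_open open_Times)
  then have "(\<lambda>u. indicator ({0<..<1} \<times> {0<..<1}) u *\<^sub>R copula_of K u) \<in> borel_measurable lborel"
    using borel_measurable_copula_of[OF compact_imp_bounded[OF assms(1)] assms(2)]
    by (intro borel_measurable_scaleR borel_measurable_indicator) simp_all
  moreover have "AE u in lborel. 0 \<le> indicator ({0<..<1} \<times> {0<..<1}) u *\<^sub>R copula_of K u"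
    by (simp add: copula_of_def)
  ultimately have "(LINT u : {0<..<1} \<times> {0<..<1} | lborel. copula_of K u)
      = enn2real (\<integral>\<^sup>+u. ennreal (indicator ({0<..<1} \<times> {0<..<1}) u * copula_of K u) \<partial>lborel)"
    unfolding set_lebesgue_integral_def by (simp add: integral_eq_nn_integral)
  also have "\<dots> = measure lborel {t \<in> {0..} \<times> {0..}. support_fun K t + fst t + snd t \<le> 2} / 2"
    unfolding nn_integral_copula_of[OF assms] enn2real_mult measure_def by (subst enn2real_ennreal) auto
  finally show ?thesis .
qed

lemma dependency_set_nonempty:
  assumes "prob_space M" "\<xi> \<in> borel_measurable M" "simple_max_stable M \<xi>" "dependency_set M \<xi> K"
  shows "K \<noteq> {}"
proof
  assume "K = {}"
  \<comment> \<open>then the joint cdf is the junk constant exp (- Sup {}), but the marginal forces it to 0 as x \<rightarrow> 0\<close>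
  interpret prob_space M by fact
  have [measurable]: "(\<lambda>\<omega>. fst (\<xi> \<omega>)) \<in> borel_measurable M"
    by (rule measurable_compose[OF assms(2)]) (intro borel_measurable_continuous_onI continuous_intros)
  define s where "s = support_fun {} (1, 1)"
  define x where "x = 1 / (\<bar>s\<bar> + 1)"
  have "x > 0"
    by (simp add: x_def add_pos_nonneg)
  have "exp (- s) = joint_cdf M \<xi> (x, 1)"
    using assms(4) \<open>K = {}\<close> \<open>x > 0\<close> by (simp add: dependency_set_def support_fun_def s_def)
  also have "\<dots> \<le> measure M {\<omega> \<in> space M. fst (\<xi> \<omega>) \<le> x}"
    unfolding joint_cdf_def by (rule finite_measure_mono) auto
  also have "\<dots> = exp (- (\<bar>s\<bar> + 1))"
    using assms(3) \<open>x > 0\<close> by (simp add: simple_max_stable_def x_def)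
  finally show False
    by simp
qed

theorem mainTheorem12:
  fixes M :: "'a measure" and \<xi> :: "'a \<Rightarrow> real \<times> real" and K :: "(real \<times> real) set"
  assumes "prob_space M"
    and "\<xi> \<in> borel_measurable M"
    and "simple_max_stable M \<xi>"
    and "dependency_set M \<xi> K"
  shows "spearman_rho (copula_of K) =
    3 * (2 * measure lborel (polar_pos ((\<lambda>y. (1/2::real) *\<^sub>R y) ` minkowski_sum K ({0..1} \<times> {0..1}))) - 1)"
proof -
  have K: "compact K" "K \<subseteq> {0..1} \<times> {0..1}"
    using assms(4) by (auto simp: dependency_set_def)
  have "K \<noteq> {}"
    by (rule dependency_set_nonempty[OF assms])
  have "K \<subseteq> {0..} \<times> {0..}"
    using K(2) by auto
  with K(1) \<open>K \<noteq> {}\<close> show ?thesis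
    by (simp add: spearman_rho_def set_lebesgue_integral_copula_of polar_pos_half_minkowski_unit_square)
qed

end
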